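(* Under the Gaussian tile model described in the context, with the location $X$ uniformly distributed a priori on $[L]$, the maximum likelihood location estimate is given by minimizing the norm induced by a generalized inner product: $$\hat{\ell}_{\mathrm{GIP}_{2D}}=\operatorname*{arg\,min}_{\ell\in[L]}\big\|\vec{\mathbf{y}}-\vec{\mathbf{y}}^\ell\big\|_{\mathbf{G}},$$ where $\|\mathbf v\|_{\mathbf G}=\sqrt{\mathbf v^{\top}\mathbf G\mathbf v}$ and $\mathbf{G}$ is the $N_wN_d\times N_wN_d$ diagonal matrix with $$\mathbf{G}_{k+(j-1)N_w,\,k+(j-1)N_w}=\frac{1}{2\sigma_i^2+N_0/\tilde A_{k,j}},\qquad k\in[N_w],\ j\in[N_d].$$
   Context: Setting: each image is a matrix of $N_w\times N_d$ tiles; for a matrix $\mathbf Y$, its column-wise vectorization $\vec{\mathbf y}\in\mathbb R^{N_wN_d}$ has $\vec y_{k+(j-1)N_w}=y_{k,j}$. The captured image is $Y_{k,j}=a_{k,j}+n^i_{k,j}+n^s_{k,j}$, where $a_{k,j}$ is the road signal, $n^i_{k,j}\sim\mathcal N(0,\sigma_i^2)$ is intrinsic noise and $n^s_{k,j}\sim\mathcal N(0,N_0/\tilde A_{k,j})$ is sensor noise, with $\sigma_i^2>0$, $N_0>0$, and $\tilde A_{k,j}>0$ the area of the projection of road tile $(k,j)$ onto the camera's focal plane. The $\ell$-th global map section ($\ell\in[L]$) is $Y^\ell_{k,j}=a^\ell_{k,j}+n^{i,\ell}_{k,j}$ with $n^{i,\ell}_{k,j}\sim\mathcal N(0,\sigma_i^2)$;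 if the true location is $\ell$ then $a_{k,j}=a^\ell_{k,j}$ for all tiles. All noises are independent across tiles and of one another. Conditional on $X=\ell$, the captured image depends on the map only through $\mathbf Y^\ell$, and given $Y^\ell_{k,j}=y^\ell_{k,j}$ the signal is modeled as $a^\ell_{k,j}\sim\mathcal N(y^\ell_{k,j},\sigma_i^2)$, independently across tiles. The maximum likelihood location estimate is the $\ell$ maximizing $\Pr(X=\ell\mid\mathbf Y=\mathbf y,\mathbf Y^l=\mathbf y^l, l\in[L])$. *)

theory Defs
  imports "HOL-Probability.Probability"
begin

text \<open>Images are real-valued functions of the tile index (k,j), k in 1..Nw, j in 1..Nd.
  sig is the standard deviation of the intrinsic noise (variance sig^2).\<close>

text \<open>Column-wise vectorization: vec_y (k + (j-1) Nw) = y k j, indices 1..Nw*Nd.\<close>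
definition vecz :: "nat \<Rightarrow> (nat \<Rightarrow> nat \<Rightarrow> real) \<Rightarrow> nat \<Rightarrow> real" where
  "vecz Nw Y p = Y ((p - 1) mod Nw + 1) ((p - 1) div Nw + 1)"

definition Gmat :: "nat \<Rightarrow> real \<Rightarrow> real \<Rightarrow> (nat \<Rightarrow> nat \<Rightarrow> real) \<Rightarrow> nat \<Rightarrow> nat \<Rightarrow> real" where
  "Gmat Nw sig N0 At p q =
     (if p = q then 1 / (2 * sig\<^sup>2 + N0 / At ((p - 1) mod Nw + 1) ((p - 1) div Nw + 1))
      else 0)"

definition Gnorm :: "nat \<Rightarrow> (nat \<Rightarrow> nat \<Rightarrow> real) \<Rightarrow> (nat \<Rightarrow> real) \<Rightarrow> real" where
  "Gnorm n G v = sqrt (\<Sum>p\<in>{1..n}. \<Sum>q\<in>{1..n}. v p * G p q * v q)"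

text \<open>Density at y of a + n_i + n_s, where a ~ N(m, sig^2) (signal given map value m),
  n_i ~ N(0, sig^2), n_s ~ N(0, N0/At), all independent (convolution of densities).\<close>
definition tile_lik :: "real \<Rightarrow> real \<Rightarrow> real \<Rightarrow> real \<Rightarrow> real \<Rightarrow> real" where
  "tile_lik sig N0 At m y =
     (\<integral>a. normal_density m sig a *
        (\<integral>u. normal_density 0 sig u * normal_density 0 (sqrt (N0 / At)) (y - a - u) \<partial>lborel)
      \<partial>lborel)"

definition img_lik :: "nat \<Rightarrow> nat \<Rightarrow> real \<Rightarrow> real \<Rightarrow> (nat \<Rightarrow> nat \<Rightarrow> real)
    \<Rightarrow> (nat \<Rightarrow> nat \<Rightarrow> real) \<Rightarrow> (nat \<Rightarrow> nat \<Rightarrow> real) \<Rightarrow> real" where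
  "img_lik Nw Nd sig N0 At yl y =
     (\<Prod>k\<in>{1..Nw}. \<Prod>j\<in>{1..Nd}. tile_lik sig N0 (At k j) (yl k j) (y k j))"

definition posterior :: "nat \<Rightarrow> nat \<Rightarrow> nat \<Rightarrow> real \<Rightarrow> real \<Rightarrow> (nat \<Rightarrow> nat \<Rightarrow> real)
    \<Rightarrow> (nat \<Rightarrow> nat \<Rightarrow> nat \<Rightarrow> real) \<Rightarrow> (nat \<Rightarrow> nat \<Rightarrow> real) \<Rightarrow> nat \<Rightarrow> real" where
  "posterior L Nw Nd sig N0 At ymap y l =
     (1 / real L) * img_lik Nw Nd sig N0 At (ymap l) y /
     (\<Sum>m\<in>{1..L}. (1 / real L) * img_lik Nw Nd sig N0 At (ymap m) y)"

definition max_lik_estimates where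
  "max_lik_estimates L Nw Nd sig N0 At ymap y =
     {l \<in> {1..L}. \<forall>m\<in>{1..L}.
        posterior L Nw Nd sig N0 At ymap y m \<le> posterior L Nw Nd sig N0 At ymap y l}"

end

theory Submission
  imports Defs
begin

text \<open>Each tile of the captured image is the map value plus three independent centred Gaussians
  (signal uncertainty and intrinsic noise, both of variance \<open>\<sigma>\<^sub>i\<^sup>2\<close>, and sensor noise of
  variance \<open>N\<^sub>0/A\<close>), so its likelihood is a Gaussian density of variance \<open>2\<sigma>\<^sub>i\<^sup>2 + N\<^sub>0/A\<close>
  around the map value. The image likelihood is therefore a location-independent constant times
  \<open>exp (-\<parallel>y - y\<^sup>l\<parallel>\<^sub>G\<^sup>2 / 2)\<close>; with a uniform prior the posterior is increasing in the likelihood,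
  hence maximal exactly where the \<open>G\<close>-distance is minimal.\<close>

definition tile_var :: "real \<Rightarrow> real \<Rightarrow> real \<Rightarrow> real" where
  "tile_var sig N0 A = 2 * sig\<^sup>2 + N0 / A"

definition weighted_sq_dist ::
    "nat \<Rightarrow> nat \<Rightarrow> (nat \<Rightarrow> nat \<Rightarrow> real) \<Rightarrow> (nat \<Rightarrow> nat \<Rightarrow> real) \<Rightarrow> (nat \<Rightarrow> nat \<Rightarrow> real) \<Rightarrow> real" where
  "weighted_sq_dist Nw Nd v y z = (\<Sum>k\<in>{1..Nw}. \<Sum>j\<in>{1..Nd}. (y k j - z k j)\<^sup>2 / v k j)"

lemma normal_density_convolution:
  assumes "0 < \<sigma>" and "0 < \<tau>"
  shows "(\<integral>a. normal_density \<mu> \<sigma> a * normal_density 0 \<tau> (x - a) \<partial>lborel)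
         = normal_density \<mu> (sqrt (\<sigma>\<^sup>2 + \<tau>\<^sup>2)) x"
proof -
  have "(\<integral>\<^sup>+a. ennreal (normal_density \<mu> \<sigma> a * normal_density 0 \<tau> (x - a)) \<partial>lborel)
     = (\<integral>\<^sup>+b. ennreal (normal_density \<mu> \<sigma> (\<mu> + b) * normal_density 0 \<tau> (x - (\<mu> + b))) \<partial>lborel)"
    using nn_integral_real_affine[where c=1 and t=\<mu>
        and f="\<lambda>a. ennreal (normal_density \<mu> \<sigma> a * normal_density 0 \<tau> (x - a))"]
    by simp
  also have "\<dots> = (\<integral>\<^sup>+b. ennreal (normal_density 0 \<tau> ((x - \<mu>) - b) * normal_density 0 \<sigma> b) \<partial>lborel)"
    by (simp add: normal_density_def algebra_simps)
  also have "\<dots> = ennreal (normal_density 0 (sqrt (\<tau>\<^sup>2 + \<sigma>\<^sup>2)) (x - \<mu>))"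
    using conv_normal_density_zero_mean[OF assms(2,1)] by metis
  also have "normal_density 0 (sqrt (\<tau>\<^sup>2 + \<sigma>\<^sup>2)) (x - \<mu>) = normal_density \<mu> (sqrt (\<sigma>\<^sup>2 + \<tau>\<^sup>2)) x"
    by (simp add: normal_density_def add.commute)
  finally have "has_bochner_integral lborel (\<lambda>a. normal_density \<mu> \<sigma> a * normal_density 0 \<tau> (x - a))
      (normal_density \<mu> (sqrt (\<sigma>\<^sup>2 + \<tau>\<^sup>2)) x)"
    by (intro has_bochner_integral_nn_integral) (auto simp: normal_density_nonneg)
  then show ?thesis
    by (simp add: has_bochner_integral_integral_eq)
qed

lemma tile_lik_eq_normal_density:
  assumes "0 < sig" and "0 < N0" and "0 < A"
  shows "tile_lik sig N0 A m y = normal_density m (sqrt (tile_var sig N0 A)) y"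
proof -
  have sensor_sd_pos: "0 < sqrt (N0 / A)"
    using assms by simp
  have noise_density: "(\<integral>u. normal_density 0 sig u * normal_density 0 (sqrt (N0 / A)) (y - a - u) \<partial>lborel)
     = normal_density 0 (sqrt (sig\<^sup>2 + N0 / A)) (y - a)" for a
    using normal_density_convolution[OF assms(1) sensor_sd_pos, of 0] assms by simp
  have "tile_lik sig N0 A m y
      = (\<integral>a. normal_density m sig a * normal_density 0 (sqrt (sig\<^sup>2 + N0 / A)) (y - a) \<partial>lborel)"
    by (simp add: tile_lik_def noise_density)
  also have "\<dots> = normal_density m (sqrt (sig\<^sup>2 + (sqrt (sig\<^sup>2 + N0 / A))\<^sup>2)) y"
    by (rule normal_density_convolution) (use assms in \<open>auto intro: add_pos_pos\<close>)
  also have "sig\<^sup>2 + (sqrt (sig\<^sup>2 + N0 / A))\<^sup>2 = tile_var sig N0 A"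
    using assms by (simp add: tile_var_def)
  finally show ?thesis .
qed

lemma img_lik_eq_exp_weighted_sq_dist:
  assumes "0 < sig" and "0 < N0"
    and At_pos: "\<And>k j. k \<in> {1..Nw} \<Longrightarrow> j \<in> {1..Nd} \<Longrightarrow> 0 < At k j"
  shows "img_lik Nw Nd sig N0 At z y
    = (\<Prod>k\<in>{1..Nw}. \<Prod>j\<in>{1..Nd}. 1 / sqrt (2 * pi * tile_var sig N0 (At k j)))
      * exp (- weighted_sq_dist Nw Nd (\<lambda>k j. tile_var sig N0 (At k j)) y z / 2)"
proof -
  let ?v = "\<lambda>k j. tile_var sig N0 (At k j)"
  have "img_lik Nw Nd sig N0 At z y
      = (\<Prod>k\<in>{1..Nw}. \<Prod>j\<in>{1..Nd}.
           1 / sqrt (2 * pi * ?v k j) * exp (- ((y k j - z k j)\<^sup>2 / ?v k j) / 2))"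
    unfolding img_lik_def
  proof (intro prod.cong refl)
    fix k j assume kj: "k \<in> {1..Nw}" "j \<in> {1..Nd}"
    have "0 < ?v k j"
      using assms At_pos[OF kj] by (simp add: tile_var_def add_pos_pos)
    then show "tile_lik sig N0 (At k j) (z k j) (y k j)
        = 1 / sqrt (2 * pi * ?v k j) * exp (- ((y k j - z k j)\<^sup>2 / ?v k j) / 2)"
      using tile_lik_eq_normal_density assms At_pos[OF kj]
      by (simp add: normal_density_def power2_eq_square field_simps)
  qed
  also have "\<dots> = (\<Prod>k\<in>{1..Nw}. \<Prod>j\<in>{1..Nd}. 1 / sqrt (2 * pi * ?v k j))
      * exp (\<Sum>k\<in>{1..Nw}. \<Sum>j\<in>{1..Nd}. - ((y k j - z k j)\<^sup>2 / ?v k j) / 2)"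
    by (simp only: prod.distrib exp_sum finite_atLeastAtMost)
  also have "(\<Sum>k\<in>{1..Nw}. \<Sum>j\<in>{1..Nd}. - ((y k j - z k j)\<^sup>2 / ?v k j) / 2)
      = - weighted_sq_dist Nw Nd ?v y z / 2"
    by (simp add: weighted_sq_dist_def sum_negf sum_divide_distrib)
  finally show ?thesis .
qed

lemma posterior_le_iff_img_lik_le:
  assumes "L \<ge> 1" and lik_pos: "\<And>l. l \<in> {1..L} \<Longrightarrow> 0 < img_lik Nw Nd sig N0 At (ymap l) y"
  shows "posterior L Nw Nd sig N0 At ymap y m \<le> posterior L Nw Nd sig N0 At ymap y l
    \<longleftrightarrow> img_lik Nw Nd sig N0 At (ymap m) y \<le> img_lik Nw Nd sig N0 At (ymap l) y"
proof -
  define S where "S = (\<Sum>m\<in>{1..L}. 1 / real L * img_lik Nw Nd sig N0 At (ymap m) y)"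
  have "0 < S"
    unfolding S_def using assms by (intro sum_pos) auto
  then show ?thesis
    unfolding posterior_def S_def[symmetric] using assms(1)
    by (simp add: divide_le_cancel mult_less_0_iff)
qed

lemma bij_betw_vec_index:
  fixes Nw Nd :: nat
  assumes "Nw \<ge> 1"
  shows "bij_betw (\<lambda>p. ((p - 1) mod Nw + 1, (p - 1) div Nw + 1)) {1..Nw*Nd} ({1..Nw} \<times> {1..Nd})"
proof -
  let ?h = "\<lambda>p. ((p - 1) mod Nw + 1, (p - 1) div Nw + 1)"
  have inj: "inj_on ?h {1..Nw*Nd}"
  proof (rule inj_onI)
    fix p q assume "p \<in> {1..Nw*Nd}" "q \<in> {1..Nw*Nd}" and h: "?h p = ?h q"
    from h have "(p - 1) mod Nw = (q - 1) mod Nw" and "(p - 1) div Nw = (q - 1) div Nw"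
      by simp_all
    then have "p - 1 = q - 1"
      by (metis div_mult_mod_eq)
    with \<open>p \<in> {1..Nw*Nd}\<close> \<open>q \<in> {1..Nw*Nd}\<close> show "p = q"
      by auto
  qed
  have "?h ` {1..Nw*Nd} \<subseteq> {1..Nw} \<times> {1..Nd}"
  proof clarify
    fix p assume "p \<in> {1..Nw*Nd}"
    then have "(p - 1) div Nw < Nd"
      by (intro less_mult_imp_div_less) (auto simp: mult.commute)
    moreover have "(p - 1) mod Nw < Nw"
      using assms by simp
    ultimately show "(p - 1) mod Nw + 1 \<in> {1..Nw} \<and> (p - 1) div Nw + 1 \<in> {1..Nd}"
      by simp_all
  qed
  moreover have "card (?h ` {1..Nw*Nd}) = card ({1..Nw} \<times> {1..Nd})"
    using card_image[OF inj] by (simp add: card_cartesian_product)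
  ultimately have "?h ` {1..Nw*Nd} = {1..Nw} \<times> {1..Nd}"
    by (intro card_subset_eq) auto
  with inj show ?thesis
    by (rule bij_betw_imageI)
qed

lemma sum_vec_index:
  fixes Nw Nd :: nat and f :: "nat \<Rightarrow> nat \<Rightarrow> 'a::comm_monoid_add"
  assumes "Nw \<ge> 1"
  shows "(\<Sum>p\<in>{1..Nw*Nd}. f ((p - 1) mod Nw + 1) ((p - 1) div Nw + 1))
       = (\<Sum>k\<in>{1..Nw}. \<Sum>j\<in>{1..Nd}. f k j)"
  using sum.reindex_bij_betw[OF bij_betw_vec_index[OF assms], of "\<lambda>(k, j). f k j"]
  by (simp add: sum.cartesian_product)

lemma sum_diagonal_quadratic_form:
  fixes w d :: "'a \<Rightarrow> 'b::comm_ring_1"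
  assumes "finite A"
  shows "(\<Sum>p\<in>A. \<Sum>q\<in>A. w p * (if p = q then d p else 0) * w q) = (\<Sum>p\<in>A. d p * (w p)\<^sup>2)"
proof -
  have "w p * (if p = q then d p else 0) * w q = (if p = q then d p * (w p)\<^sup>2 else 0)" for p q
    by (simp add: power2_eq_square ac_simps)
  with assms show ?thesis
    by simp
qed

lemma Gnorm_Gmat_vecz_eq:
  assumes "Nw \<ge> 1"
  shows "Gnorm (Nw * Nd) (Gmat Nw sig N0 At) (\<lambda>p. vecz Nw y p - vecz Nw z p)
    = sqrt (weighted_sq_dist Nw Nd (\<lambda>k j. tile_var sig N0 (At k j)) y z)"
proof -
  let ?k = "\<lambda>p. (p - 1) mod Nw + 1" and ?j = "\<lambda>p. (p - 1) div Nw + 1"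
  have "Gmat Nw sig N0 At p q = (if p = q then 1 / tile_var sig N0 (At (?k p) (?j p)) else 0)" for p q
    by (simp add: Gmat_def tile_var_def)
  then have "Gnorm (Nw * Nd) (Gmat Nw sig N0 At) (\<lambda>p. vecz Nw y p - vecz Nw z p)
      = sqrt (\<Sum>p\<in>{1..Nw*Nd}. (y (?k p) (?j p) - z (?k p) (?j p))\<^sup>2 / tile_var sig N0 (At (?k p) (?j p)))"
    by (simp add: Gnorm_def sum_diagonal_quadratic_form vecz_def)
  also have "\<dots> = sqrt (weighted_sq_dist Nw Nd (\<lambda>k j. tile_var sig N0 (At k j)) y z)"
    unfolding weighted_sq_dist_def by (subst sum_vec_index[OF assms]) (rule refl)
  finally show ?thesis .
qed

theorem corollary1:
  fixes L Nw Nd :: nat and sig N0 :: real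
    and At :: "nat \<Rightarrow> nat \<Rightarrow> real"
    and ymap :: "nat \<Rightarrow> nat \<Rightarrow> nat \<Rightarrow> real"
    and y :: "nat \<Rightarrow> nat \<Rightarrow> real"
  assumes "L \<ge> 1" and "Nw \<ge> 1" and "Nd \<ge> 1"
    and "sig > 0" and "N0 > 0"
    and "\<And>k j. k \<in> {1..Nw} \<Longrightarrow> j \<in> {1..Nd} \<Longrightarrow> At k j > 0"
  shows "max_lik_estimates L Nw Nd sig N0 At ymap y =
    {l \<in> {1..L}. \<forall>m\<in>{1..L}.
       Gnorm (Nw * Nd) (Gmat Nw sig N0 At) (\<lambda>p. vecz Nw y p - vecz Nw (ymap l) p)
       \<le> Gnorm (Nw * Nd) (Gmat Nw sig N0 At) (\<lambda>p. vecz Nw y p - vecz Nw (ymap m) p)}"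
proof -
  define C where "C = (\<Prod>k\<in>{1..Nw}. \<Prod>j\<in>{1..Nd}. 1 / sqrt (2 * pi * tile_var sig N0 (At k j)))"
  define Q where "Q l = weighted_sq_dist Nw Nd (\<lambda>k j. tile_var sig N0 (At k j)) y (ymap l)" for l
  have lik: "img_lik Nw Nd sig N0 At (ymap l) y = C * exp (- Q l / 2)" for l
    unfolding C_def Q_def using img_lik_eq_exp_weighted_sq_dist assms(4-6) by blast
  have "0 < C"
    unfolding C_def using assms(4-6)
    by (intro prod_pos) (auto simp: tile_var_def intro!: mult_pos_pos add_pos_pos)
  then have "posterior L Nw Nd sig N0 At ymap y m \<le> posterior L Nw Nd sig N0 At ymap y l
      \<longleftrightarrow> sqrt (Q l) \<le> sqrt (Q m)" for l m
    using posterior_le_iff_img_lik_le[OF assms(1)] by (simp add: lik)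
  then show ?thesis
    unfolding max_lik_estimates_def Q_def Gnorm_Gmat_vecz_eq[OF assms(2)] by simp
qed

end
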